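(* Assume the standing hypotheses and definitions in the context. For any $(t_0,x_0)\in\mathbb{R}\times\mathbb{R}^n$, the function $t\mapsto H(t,X(t,t_0,x_0))$ is a solution of the linear system $x'=A(t)x$.
   Context: Standing hypotheses: $A:\mathbb{R}\to\mathbb{R}^{n\times n}$ is continuous and bounded, $T(t,s)$ is the evolution operator of $x'=A(t)x$. $\mu:\mathbb{R}\to(0,\infty)$ is an increasing differentiable growth rate: $\mu(0)=1$, $\lim_{t\to-\infty}\mu(t)=0$, $\lim_{t\to+\infty}\mu(t)=+\infty$. The system $x'=A(t)x$ admits an algebraic dichotomy: projections $P(s)$, $Q(s)=I-P(s)$, constants $K,\alpha>0$ with $T(t,s)P(s)=P(t)T(t,s)$, $\|T(t,s)P(s)\|\le K(\mu(t)/\mu(s))^{-\alpha}$ ($t\ge s$), $\|T(t,s)Q(s)\|\le K(\mu(s)/\mu(t))^{-\alpha}$ ($t\le s$). $f:\mathbb{R}\times\mathbb{R}^n\to\mathbb{R}^n$ is continuous, $\|f(t,x)\|\le\beta\mu'(t)\mu^{-1}(t)$, $\|f(t,x_1)-f(t,x_2)\|\le\gamma\mu'(t)\mu^{-1}(t)\|x_1-x_2\|$ for constants $\beta,\gamma\ge0$, and $6K\gamma\alpha^{-1}<1$. $X(t,\tau,\xi)$ is the solution of $x'=A(t)x+f(t,x)$ with $X(\tau)=\xi$. For each $(\tau,\xi)$, $h(t,(\tau,\xi))$ denotes the unique solution bounded on $\mathbb{R}$ of $Z'=A(t)Z-f(t,X(t,\tau,\xi))$ (it exists and is unique under these hypotheses).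 Define $H(t,x)=x+h(t,(t,x))$. *)

theory Defs
  imports "HOL-Analysis.Analysis"
begin

definition mnorm :: "real^'n^'n \<Rightarrow> real" where
  "mnorm M = onorm (\<lambda>x. M *v x)"

definition solves_on_R :: "(real \<Rightarrow> real^'n^'n) \<Rightarrow> (real \<Rightarrow> real^'n) \<Rightarrow> (real \<Rightarrow> real^'n) \<Rightarrow> bool" where
  "solves_on_R A g x \<longleftrightarrow> (\<forall>t. (x has_vector_derivative (A t *v x t + g t)) (at t))"

text \<open>\<open>H(t,x) = x + h(t,(t,x))\<close>; here \<open>h t \<tau> \<xi>\<close> stands for \<open>h(t,(\<tau>,\<xi>))\<close>.\<close>
definition Hmap :: "(real \<Rightarrow> real \<Rightarrow> real^'n \<Rightarrow> real^'n) \<Rightarrow> real \<Rightarrow> real^'n \<Rightarrow> real^'n" where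
  "Hmap h t x = x + h t t x"

end

(* Since f(t, .) is Lipschitz with constant gamma mu'/mu, which has the primitive gamma ln mu,
   solutions of x' = A(t)x + f(t,x) are unique, so X is a flow: X(s, t, X(t, t0, x0)) = X(s, t0, x0).
   Hence h(., (t, X(t, t0, x0))) and h(., (t0, x0)) are bounded solutions of the same equation
   Z' = A(t)Z - f(t, X(t, t0, x0)); their difference is a bounded solution of x' = A(t)x, which
   the dichotomy forces to vanish. So H(t, X(t, t0, x0)) = X(t, t0, x0) + h(t, (t0, x0)), a sum
   of two solutions whose inhomogeneities f and -f cancel.
   The bound on f, the smallness condition and continuity only serve to guarantee that X and h
   exist, which the statement takes as given. *)

theory Submission
  imports Defs
begin

lemma has_real_derivative_inner_self:
  fixes d :: "real \<Rightarrow> 'a::real_inner"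
  assumes "(d has_vector_derivative D) (at t)"
  shows "((\<lambda>t. d t \<bullet> d t) has_real_derivative 2 * (d t \<bullet> D)) (at t)"
proof -
  have "(d has_derivative (\<lambda>h. h *\<^sub>R D)) (at t)"
    using assms by (simp add: has_vector_derivative_def)
  from has_derivative_inner[OF this this]
  have "((\<lambda>t. d t \<bullet> d t) has_derivative (\<lambda>h. d t \<bullet> (h *\<^sub>R D) + (h *\<^sub>R D) \<bullet> d t)) (at t)" .
  moreover have "(\<lambda>h. d t \<bullet> (h *\<^sub>R D) + (h *\<^sub>R D) \<bullet> d t) = (\<lambda>h. 2 * (d t \<bullet> D) * h)"
    by (auto simp: inner_commute algebra_simps)
  ultimately show ?thesis by (simp add: has_field_derivative_def)
qed

lemma has_real_derivative_exp_weight: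
  fixes u u' \<Phi> c :: "real \<Rightarrow> real"
  assumes "(u has_real_derivative u' t) (at t)" and "(\<Phi> has_real_derivative c t) (at t)"
  shows "((\<lambda>s. u s * exp (k * \<Phi> s)) has_real_derivative
           exp (k * \<Phi> t) * (u' t + k * c t * u t)) (at t)"
  by (rule DERIV_cong[OF DERIV_mult[OF assms(1) DERIV_fun_exp[OF DERIV_cmult[OF assms(2)]]]])
     (simp add: algebra_simps)

text \<open>Gronwall's argument: \<open>u exp(-\<Phi>)\<close> is nonincreasing and \<open>u exp(\<Phi>)\<close> nondecreasing,
  so a nonnegative \<open>u\<close> vanishing at \<open>t\<^sub>0\<close> vanishes on both sides of it.\<close>
lemma gronwall_zero:
  fixes u u' \<Phi> c :: "real \<Rightarrow> real"
  assumes u: "\<And>t. (u has_real_derivative u' t) (at t)"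
    and \<Phi>: "\<And>t. (\<Phi> has_real_derivative c t) (at t)"
    and nonneg: "\<And>t. u t \<ge> 0"
    and bound: "\<And>t. \<bar>u' t\<bar> \<le> c t * u t"
    and zero: "u t\<^sub>0 = 0"
  shows "u t = 0"
proof (cases "t\<^sub>0 \<le> t")
  case True
  have "u t * exp (- \<Phi> t) \<le> u t\<^sub>0 * exp (- \<Phi> t\<^sub>0)"
  proof (rule DERIV_nonpos_imp_nonincreasing[OF True])
    fix s
    have "exp (-1 * \<Phi> s) * (u' s + -1 * c s * u s) \<le> 0"
      using bound[of s] by (intro mult_nonneg_nonpos) auto
    with has_real_derivative_exp_weight[OF u \<Phi>, where t = s and k = "-1"]
    show "\<exists>y. ((\<lambda>s. u s * exp (- \<Phi> s)) has_real_derivative y) (at s) \<and> y \<le> 0"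
      by auto
  qed
  with zero nonneg[of t] show ?thesis by (simp add: mult_le_0_iff)
next
  case False
  have "u t * exp (\<Phi> t) \<le> u t\<^sub>0 * exp (\<Phi> t\<^sub>0)"
  proof (rule DERIV_nonneg_imp_nondecreasing[of t t\<^sub>0])
    fix s
    have "0 \<le> exp (1 * \<Phi> s) * (u' s + 1 * c s * u s)"
      using bound[of s] by (intro mult_nonneg_nonneg) auto
    with has_real_derivative_exp_weight[OF u \<Phi>, where t = s and k = 1]
    show "\<exists>y. ((\<lambda>s. u s * exp (\<Phi> s)) has_real_derivative y) (at s) \<and> y \<ge> 0"
      by auto
  qed (use False in simp)
  with zero nonneg[of t] show ?thesis by (simp add: mult_le_0_iff)
qed

lemma has_vector_derivative_unique_Lipschitz:
  fixes x y :: "real \<Rightarrow> 'a::real_inner" and F :: "real \<Rightarrow> 'a \<Rightarrow> 'a"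
  assumes x: "\<And>t. (x has_vector_derivative F t (x t)) (at t)"
    and y: "\<And>t. (y has_vector_derivative F t (y t)) (at t)"
    and Lipschitz: "\<And>t u v. norm (F t u - F t v) \<le> L t * norm (u - v)"
    and \<Phi>: "\<And>t. (\<Phi> has_real_derivative L t) (at t)"
    and init: "x t\<^sub>0 = y t\<^sub>0"
  shows "x t = y t"
proof -
  define d where "d t = x t - y t" for t
  define D where "D t = F t (x t) - F t (y t)" for t
  have d: "(d has_vector_derivative D t) (at t)" for t
    unfolding d_def D_def by (rule has_vector_derivative_diff[OF x y])
  have "d t \<bullet> d t = 0"
  proof (rule gronwall_zero[where u = "\<lambda>t. d t \<bullet> d t" and \<Phi> = "\<lambda>t. 2 * \<Phi> t"])
    show "((\<lambda>t. d t \<bullet> d t) has_real_derivative 2 * (d t \<bullet> D t)) (at t)" for t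
      by (rule has_real_derivative_inner_self[OF d])
    show "((\<lambda>t. 2 * \<Phi> t) has_real_derivative 2 * L t) (at t)" for t
      by (rule DERIV_cmult[OF \<Phi>])
    show "0 \<le> d t \<bullet> d t" for t
      by simp
    show "\<bar>2 * (d t \<bullet> D t)\<bar> \<le> 2 * L t * (d t \<bullet> d t)" for t
    proof -
      have "\<bar>d t \<bullet> D t\<bar> \<le> norm (d t) * norm (D t)"
        by (rule Cauchy_Schwarz_ineq2)
      also have "\<dots> \<le> norm (d t) * (L t * norm (d t))"
        using Lipschitz by (simp add: D_def d_def mult_left_mono)
      also have "\<dots> = L t * (d t \<bullet> d t)"
        by (simp add: power2_norm_eq_inner[symmetric] power2_eq_square)
      finally show ?thesis by simp
    qed
    show "d t\<^sub>0 \<bullet> d t\<^sub>0 = 0"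
      by (simp add: d_def init)
  qed
  then show ?thesis by (simp add: d_def)
qed

lemma mnorm_nonneg: "0 \<le> mnorm M"
  unfolding mnorm_def by (rule onorm_pos_le[OF matrix_vector_mul_bounded_linear])

lemma norm_matrix_vector_le_mnorm: "norm (M *v v) \<le> mnorm M * norm v"
  unfolding mnorm_def by (rule onorm[OF matrix_vector_mul_bounded_linear])

lemma bounded_linear_matrix_vector_mult_left: "bounded_linear (\<lambda>M::real^'n^'m. M *v v)"
  unfolding linear_conv_bounded_linear[symmetric]
  by (rule linearI) (simp_all add: matrix_vector_mult_add_rdistrib scaleR_matrix_vector_assoc)

lemma bounded_range_imp_matrix_vector_bound:
  fixes A :: "'a \<Rightarrow> real^'n^'m"
  assumes "bounded (range A)"
  obtains M where "\<And>t v. norm (A t *v v) \<le> M * norm v"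
proof -
  obtain B where B: "\<And>t. norm (A t) \<le> B"
    using assms by (auto simp: bounded_iff)
  have "norm (A t *v v) \<le> (real CARD('m) * real CARD('n) * B) * norm v" for t v
  proof -
    have "onorm ((*v) (A t)) \<le> real CARD('m) * real CARD('n) * B"
    proof (rule onorm_le_matrix_component)
      fix i j
      have "\<bar>A t $ i $ j\<bar> \<le> norm (A t $ i)" by (rule component_le_norm_cart)
      also have "\<dots> \<le> norm (A t)" by (rule Finite_Cartesian_Product.norm_nth_le)
      finally show "\<bar>A t $ i $ j\<bar> \<le> B" using B[of t] by linarith
    qed
    with onorm[OF matrix_vector_mul_bounded_linear, of "A t" v] show ?thesis
      by (meson mult_right_mono norm_ge_zero order_trans)
  qed
  then show thesis by (rule that)
qed

lemma solves_on_R_add: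
  assumes "solves_on_R A g x" and "solves_on_R A k y"
  shows "solves_on_R A (\<lambda>t. g t + k t) (\<lambda>t. x t + y t)"
  using has_vector_derivative_add assms
  by (fastforce simp: solves_on_R_def matrix_vector_right_distrib algebra_simps)

lemma solves_on_R_diff:
  assumes "solves_on_R A g x" and "solves_on_R A k y"
  shows "solves_on_R A (\<lambda>t. g t - k t) (\<lambda>t. x t - y t)"
  using has_vector_derivative_diff assms
  by (fastforce simp: solves_on_R_def matrix_vector_mult_diff_distrib algebra_simps)

lemma solves_on_R_unique:
  fixes A :: "real \<Rightarrow> real^'n^'n" and g :: "real \<Rightarrow> real^'n \<Rightarrow> real^'n"
  assumes A: "\<And>t v. norm (A t *v v) \<le> M * norm v"
    and Lipschitz: "\<And>t u v. norm (g t u - g t v) \<le> L t * norm (u - v)"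
    and \<Phi>: "\<And>t. (\<Phi> has_real_derivative L t) (at t)"
    and x: "solves_on_R A (\<lambda>t. g t (x t)) x" and y: "solves_on_R A (\<lambda>t. g t (y t)) y"
    and init: "x t\<^sub>0 = y t\<^sub>0"
  shows "x t = y t"
proof (rule has_vector_derivative_unique_Lipschitz
    [where F = "\<lambda>t v. A t *v v + g t v" and \<Phi> = "\<lambda>t. M * t + \<Phi> t" and t\<^sub>0 = t\<^sub>0])
  show "(x has_vector_derivative A t *v x t + g t (x t)) (at t)"
    and "(y has_vector_derivative A t *v y t + g t (y t)) (at t)" for t
    using x y by (simp_all add: solves_on_R_def)
  show "((\<lambda>t. M * t + \<Phi> t) has_real_derivative M + L t) (at t)" for t
    using DERIV_add[OF DERIV_cmult[OF DERIV_ident] \<Phi>] by simp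
  show "norm ((A t *v u + g t u) - (A t *v v + g t v)) \<le> (M + L t) * norm (u - v)" for t u v
  proof -
    have "(A t *v u + g t u) - (A t *v v + g t v) = A t *v (u - v) + (g t u - g t v)"
      by (simp add: matrix_vector_mult_diff_distrib)
    also have "norm \<dots> \<le> M * norm (u - v) + L t * norm (u - v)"
      by (rule order.trans[OF norm_triangle_ineq add_mono[OF A Lipschitz]])
    finally show ?thesis by (simp add: algebra_simps)
  qed
qed (fact init)

lemma solves_on_R_homogeneous_evolution:
  fixes A :: "real \<Rightarrow> real^'n^'n" and T :: "real \<Rightarrow> real \<Rightarrow> real^'n^'n"
  assumes A: "\<And>t v. norm (A t *v v) \<le> M * norm v"
    and T_init: "\<And>s. T s s = mat 1"
    and T_deriv: "\<And>t s. ((\<lambda>t. T t s) has_vector_derivative (A t ** T t s)) (at t)"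
    and z: "solves_on_R A (\<lambda>t. 0) z"
  shows "z t = T t s *v z s"
proof (rule solves_on_R_unique[where g = "\<lambda>t v. 0" and L = "\<lambda>t. 0" and \<Phi> = "\<lambda>t. 0"
    and x = z and y = "\<lambda>t. T t s *v z s" and t\<^sub>0 = s, OF A])
  show "solves_on_R A (\<lambda>t. 0) (\<lambda>t. T t s *v z s)"
    using bounded_linear.has_vector_derivative[OF bounded_linear_matrix_vector_mult_left T_deriv]
    by (simp add: solves_on_R_def matrix_vector_mul_assoc)
qed (use z T_init in simp_all)

lemma eq_0_if_norm_le_tendsto_0:
  fixes v :: "'a::real_normed_vector"
  assumes "F \<noteq> bot" and "(b \<longlongrightarrow> 0) F" and "eventually (\<lambda>s. norm v \<le> b s) F"
  shows "v = 0"
  using tendsto_le[OF assms(1) assms(2) tendsto_const assms(3)] by simp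

text \<open>A bounded orbit of an evolution with a dichotomy vanishes: its stable component
  \<open>P(t) z(t)\<close> is controlled from the far past and its unstable component from the far future.\<close>
lemma dichotomy_bounded_orbit_zero:
  fixes T :: "real \<Rightarrow> real \<Rightarrow> real^'n^'n" and P :: "real \<Rightarrow> real^'n^'n" and z :: "real \<Rightarrow> real^'n"
  assumes mu_pos: "\<And>t. mu t > 0"
    and mu_bot: "(mu \<longlongrightarrow> 0) at_bot"
    and mu_top: "filterlim mu at_top at_top"
    and alpha_pos: "\<alpha> > 0"
    and P_inv: "\<And>t s. T t s ** P s = P t ** T t s"
    and dich_P: "\<And>t s. t \<ge> s \<Longrightarrow> mnorm (T t s ** P s) \<le> K * (mu t / mu s) powr (-\<alpha>)"
    and dich_Q: "\<And>t s. t \<le> s \<Longrightarrow> mnorm (T t s ** (mat 1 - P s)) \<le> K * (mu s / mu t) powr (-\<alpha>)"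
    and orbit: "\<And>t s. z t = T t s *v z s"
    and bounded: "bounded (range z)"
  shows "z t = 0"
proof -
  obtain C where C: "\<And>s. norm (z s) \<le> C"
    using bounded by (auto simp: bounded_iff)
  have powr_swap: "(mu a / mu b) powr (-\<alpha>) = (mu b / mu a) powr \<alpha>" for a b
    using mu_pos[of a] mu_pos[of b] by (simp add: powr_minus powr_divide)
  have "eventually (\<lambda>s. norm (P t *v z t) \<le> K * (mu s / mu t) powr \<alpha> * C) at_bot"
  proof (rule eventually_at_bot_linorderI)
    fix s assume "s \<le> t"
    have "P t *v z t = (T t s ** P s) *v z s"
      by (simp add: orbit[of t s] matrix_vector_mul_assoc P_inv)
    also have "norm \<dots> \<le> mnorm (T t s ** P s) * norm (z s)"
      by (rule norm_matrix_vector_le_mnorm)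
    also have "\<dots> \<le> K * (mu s / mu t) powr \<alpha> * C"
      using dich_P[OF \<open>s \<le> t\<close>] by (intro mult_mono' C mnorm_nonneg norm_ge_zero) (simp add: powr_swap)
    finally show "norm (P t *v z t) \<le> K * (mu s / mu t) powr \<alpha> * C" .
  qed
  moreover have "((\<lambda>s. K * (mu s / mu t) powr \<alpha> * C) \<longlongrightarrow> 0) at_bot"
    using mu_bot mu_pos alpha_pos
    by (intro tendsto_mult_left_zero tendsto_mult_right_zero tendsto_zero_powrI)
       (auto intro!: tendsto_divide_zero always_eventually less_imp_le)
  ultimately have stable: "P t *v z t = 0"
    by (rule eq_0_if_norm_le_tendsto_0[OF trivial_limit_at_bot_linorder, rotated])
  have "eventually (\<lambda>s. norm ((mat 1 - P t) *v z t) \<le> K * (mu t / mu s) powr \<alpha> * C) at_top"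
  proof (rule eventually_at_top_linorderI)
    fix s assume "t \<le> s"
    have "(mat 1 - P t) *v z t = T t s *v z s - (T t s ** P s) *v z s"
      by (simp add: orbit[of t s] matrix_vector_mult_diff_rdistrib matrix_vector_mul_assoc[symmetric]
          P_inv)
    also have "\<dots> = (T t s ** (mat 1 - P s)) *v z s"
      by (simp add: matrix_vector_mul_assoc[symmetric] matrix_vector_mult_diff_distrib
          matrix_vector_mult_diff_rdistrib)
    also have "norm \<dots> \<le> mnorm (T t s ** (mat 1 - P s)) * norm (z s)"
      by (rule norm_matrix_vector_le_mnorm)
    also have "\<dots> \<le> K * (mu t / mu s) powr \<alpha> * C"
      using dich_Q[OF \<open>t \<le> s\<close>] by (intro mult_mono' C mnorm_nonneg norm_ge_zero) (simp add: powr_swap)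
    finally show "norm ((mat 1 - P t) *v z t) \<le> K * (mu t / mu s) powr \<alpha> * C" .
  qed
  moreover have "((\<lambda>s. K * (mu t / mu s) powr \<alpha> * C) \<longlongrightarrow> 0) at_top"
    using mu_top mu_pos alpha_pos
    by (intro tendsto_mult_left_zero tendsto_mult_right_zero tendsto_zero_powrI
        tendsto_divide_0[OF tendsto_const] filterlim_at_top_imp_at_infinity)
       (auto intro!: always_eventually less_imp_le)
  ultimately have unstable: "(mat 1 - P t) *v z t = 0"
    by (rule eq_0_if_norm_le_tendsto_0[OF trivial_limit_at_top_linorder, rotated])
  from stable unstable show ?thesis
    by (simp add: matrix_vector_mult_diff_rdistrib)
qed

theorem lemma3p5:
  fixes A :: "real \<Rightarrow> real^'n^'n"
    and T :: "real \<Rightarrow> real \<Rightarrow> real^'n^'n"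
    and P :: "real \<Rightarrow> real^'n^'n"
    and mu mu' :: "real \<Rightarrow> real"
    and K \<alpha> \<beta> \<gamma> :: real
    and f :: "real \<Rightarrow> real^'n \<Rightarrow> real^'n"
    and X :: "real \<Rightarrow> real \<Rightarrow> real^'n \<Rightarrow> real^'n"
    and h :: "real \<Rightarrow> real \<Rightarrow> real^'n \<Rightarrow> real^'n"
    and t0 :: real and x0 :: "real^'n"
  assumes A_cont: "continuous_on UNIV A"
    and A_bdd: "bounded (range A)"
    and T_init: "\<And>s. T s s = mat 1"
    and T_deriv: "\<And>t s. ((\<lambda>t. T t s) has_vector_derivative (A t ** T t s)) (at t)"
    and mu_pos: "\<And>t. mu t > 0"
    and mu_incr: "strict_mono mu"
    and mu_deriv: "\<And>t. (mu has_real_derivative mu' t) (at t)"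
    and mu_0: "mu 0 = 1"
    and mu_bot: "(mu \<longlongrightarrow> 0) at_bot"
    and mu_top: "filterlim mu at_top at_top"
    and P_proj: "\<And>s. P s ** P s = P s"
    and K_pos: "K > 0" and alpha_pos: "\<alpha> > 0"
    and P_inv: "\<And>t s. T t s ** P s = P t ** T t s"
    and dich_P: "\<And>t s. t \<ge> s \<Longrightarrow> mnorm (T t s ** P s) \<le> K * (mu t / mu s) powr (-\<alpha>)"
    and dich_Q: "\<And>t s. t \<le> s \<Longrightarrow> mnorm (T t s ** (mat 1 - P s)) \<le> K * (mu s / mu t) powr (-\<alpha>)"
    and f_cont: "continuous_on UNIV (\<lambda>(t, x). f t x)"
    and beta_nonneg: "\<beta> \<ge> 0" and gamma_nonneg: "\<gamma> \<ge> 0"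
    and f_bdd: "\<And>t x. norm (f t x) \<le> \<beta> * mu' t * inverse (mu t)"
    and f_lip: "\<And>t x1 x2. norm (f t x1 - f t x2) \<le> \<gamma> * mu' t * inverse (mu t) * norm (x1 - x2)"
    and small: "6 * K * \<gamma> / \<alpha> < 1"
    and X_sol: "\<And>\<tau> \<xi>. solves_on_R A (\<lambda>t. f t (X t \<tau> \<xi>)) (\<lambda>t. X t \<tau> \<xi>) \<and> X \<tau> \<tau> \<xi> = \<xi>"
    and h_sol: "\<And>\<tau> \<xi>. solves_on_R A (\<lambda>t. - f t (X t \<tau> \<xi>)) (\<lambda>t. h t \<tau> \<xi>)
                      \<and> bounded (range (\<lambda>t. h t \<tau> \<xi>))"
  shows "solves_on_R A (\<lambda>t. 0) (\<lambda>t. Hmap h t (X t t0 x0))"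
proof -
  obtain M where A_bound: "\<And>t v. norm (A t *v v) \<le> M * norm v"
    using bounded_range_imp_matrix_vector_bound[OF A_bdd] by blast
  have ln_mu: "((\<lambda>t. \<gamma> * ln (mu t)) has_real_derivative \<gamma> * mu' t * inverse (mu t)) (at t)" for t
    using DERIV_cmult[OF DERIV_ln_divide[THEN DERIV_chain2, OF mu_pos mu_deriv], of \<gamma>]
    by (simp add: field_simps)
  have flow: "X s t (X t t0 x0) = X s t0 x0" for s t
    using solves_on_R_unique[where A = A and g = f and x = "\<lambda>s. X s t (X t t0 x0)"
        and y = "\<lambda>s. X s t0 x0" and t\<^sub>0 = t, OF A_bound f_lip ln_mu] X_sol by simp
  have h_flow: "h s t (X t t0 x0) = h s t0 x0" for s t
  proof -
    let ?z = "\<lambda>s. h s t (X t t0 x0) - h s t0 x0"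
    have "solves_on_R A (\<lambda>s. 0) ?z"
      using solves_on_R_diff[OF h_sol[of t "X t t0 x0", THEN conjunct1] h_sol[of t0 x0, THEN conjunct1]]
      by (simp add: flow)
    moreover have "bounded (range ?z)"
      using h_sol by (intro bounded_minus_comp) auto
    ultimately have "?z s = 0"
      by (intro dichotomy_bounded_orbit_zero[OF mu_pos mu_bot mu_top alpha_pos P_inv dich_P dich_Q]
          solves_on_R_homogeneous_evolution[OF A_bound T_init T_deriv])
    then show ?thesis by simp
  qed
  have "solves_on_R A (\<lambda>t. 0) (\<lambda>t. X t t0 x0 + h t t0 x0)"
    using solves_on_R_add[OF X_sol[of t0 x0, THEN conjunct1] h_sol[of t0 x0, THEN conjunct1]]
    by simp
  then show ?thesis
    by (simp add: Hmap_def h_flow)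
qed

end
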